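(* Let $\Phi$ be of type $A_n$. The map sending a face $F$ of $\mathcal P$ to its cone $\{tx\mid t\ge0,x\in F\}$ is a (natural) bijection between the nonempty proper faces of $\mathcal P$ and the faces of the hyperplane arrangement $\mathcal H$ other than $\{0\}$. Under this bijection, the $k$-dimensional faces of $\mathcal P$ correspond to the $(k+1)$-dimensional faces of $\mathcal H$, for all $k=0,\dots,n-1$.
   Context: $\Phi$ is the root system of type $A_n$ in $E=\operatorname{span}_{\mathbb R}\Phi$, $\mathcal P=\operatorname{conv}(\Phi)$, and $\mathcal H$ is the central arrangement of the linear hyperplanes $\operatorname{span}_{\mathbb R}F$, $F$ a face of $\mathcal P$ of dimension $n-2$. A region of $\mathcal H$ is a connected component of the complement of the union of its hyperplanes; the intersection poset $\mathcal L(\mathcal H)$ is the set of nonempty intersections of hyperplanes of $\mathcal H$ (including $E$); a face of $\mathcal H$ is a nonempty set $\overline R\cap x$ with $R$ a region and $x\in\mathcal L(\mathcal H)$. *)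

theory Defs
  imports "HOL-Analysis.Analysis"
begin

text \<open>Root system of type A_n realised in real^'n with CARD('n) = n + 1:
  the vectors e_i - e_j for i \<noteq> j.\<close>
definition rootsA :: "(real^'n::finite) set" where
  "rootsA = {axis i 1 - axis j 1 | i j. i \<noteq> j}"

definition ambientA :: "(real^'n::finite) set" where
  "ambientA = span rootsA"

definition polytopeA :: "(real^'n::finite) set" where
  "polytopeA = convex hull rootsA"

text \<open>The arrangement H: linear spans of the faces of P of dimension n - 2,
  where n = CARD('n) - 1.\<close>
definition arrA :: "(real^'n::finite) set set" where
  "arrA = {span F | F. F face_of polytopeA \<and> aff_dim F = int CARD('n) - 3}"

definition arr_regions :: "'a::real_normed_vector set \<Rightarrow> 'a set set \<Rightarrow> 'a set set" where
  "arr_regions E H = components (E - \<Union>H)"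

definition arr_intersections :: "'a set \<Rightarrow> 'a set set \<Rightarrow> 'a set set" where
  "arr_intersections E H = {X. \<exists>S. S \<subseteq> H \<and> X = E \<inter> \<Inter>S \<and> X \<noteq> {}}"

definition arr_faces :: "'a::real_normed_vector set \<Rightarrow> 'a set set \<Rightarrow> 'a set set" where
  "arr_faces E H = {closure R \<inter> X | R X. R \<in> arr_regions E H \<and>
      X \<in> arr_intersections E H \<and> closure R \<inter> X \<noteq> {}}"

definition cone_over :: "'a::real_vector set \<Rightarrow> 'a set" where
  "cone_over F = {t *\<^sub>R x | t x. t \<ge> 0 \<and> x \<in> F}"

end

theory Submission
  imports Defs
begin

text \<open>
  Realise A_n by the roots e_i - e_j in the hyperplane E = {x. \<Sum>x_k = 0} of real^'n.
  A nonempty proper face of conv \<Phi> is exposed by a linear functional a, and is the convex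
  hull of the roots e_i - e_j with a_i maximal and a_j minimal. Hence the proper faces are
  exactly the hulls F(I,J) of {e_i - e_j | i \<in> I, j \<in> J} for disjoint nonempty I and J, and
  the cone over F(I,J) is the sign cone of the vectors of E supported on I \<union> J that are
  nonnegative on I and nonpositive on J. The (n-2)-faces span the coordinate hyperplanes
  x_a = 0 of E, so the regions of the arrangement are the open sign chambers, and closing a
  chamber and cutting it with coordinate subspaces yields exactly the same sign cones.
  Finally F(I,J) and its cone span the same space, but F(I,J) lies in an affine hyperplane
  missing 0, so the cone has one dimension more.
\<close>

lemma span_convex_hull: "span (convex hull S) = span (S :: 'a::real_vector set)"
proof
  show "span (convex hull S) \<subseteq> span S"
    by (intro span_minimal hull_minimal) (auto simp: span_superset subspace_imp_convex)
  show "span S \<subseteq> span (convex hull S)"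
    by (intro span_mono hull_subset)
qed

lemma face_of_convex_hull_eq_convex_hull_Int:
  fixes S :: "'a::euclidean_space set"
  assumes "finite S" "T face_of convex hull S"
  shows "T = convex hull (S \<inter> T)"
proof -
  obtain S' where S': "S' \<subseteq> S" "T = convex hull S'"
    by (rule face_of_convex_hull_subset[OF finite_imp_compact[OF assms(1)] assms(2)])
  then have "T \<subseteq> convex hull (S \<inter> T)"
    using hull_subset[of S' convex] by (metis Int_greatest hull_mono)
  moreover have "convex hull (S \<inter> T) \<subseteq> T"
    using face_of_imp_convex[OF assms(2)] by (intro hull_minimal) auto
  ultimately show ?thesis by blast
qed

lemma sum_sum_scaleR_diff:
  fixes u v :: "'a \<Rightarrow> 'b::real_vector"
  shows "(\<Sum>i\<in>I. \<Sum>j\<in>J. (a i * b j) *\<^sub>R (u i - v j))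
       = (\<Sum>j\<in>J. b j) *\<^sub>R (\<Sum>i\<in>I. a i *\<^sub>R u i) - (\<Sum>i\<in>I. a i) *\<^sub>R (\<Sum>j\<in>J. b j *\<^sub>R v j)"
proof -
  have "(\<Sum>i\<in>I. \<Sum>j\<in>J. (a i * b j) *\<^sub>R u i) = (\<Sum>j\<in>J. b j) *\<^sub>R (\<Sum>i\<in>I. a i *\<^sub>R u i)"
    by (simp add: scaleR_sum_right scaleR_sum_left[symmetric] sum_distrib_left mult.commute)
  moreover have "(\<Sum>i\<in>I. \<Sum>j\<in>J. (a i * b j) *\<^sub>R v j) = (\<Sum>i\<in>I. a i) *\<^sub>R (\<Sum>j\<in>J. b j *\<^sub>R v j)"
    by (subst sum.swap) (simp add: scaleR_sum_right scaleR_sum_left[symmetric] sum_distrib_left mult.commute)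
  ultimately show ?thesis
    by (simp add: scaleR_diff_right sum_subtractf)
qed

lemma vector_eq_sum_axis_on:
  fixes x :: "real^'n::finite"
  assumes "\<forall>k. k \<notin> K \<longrightarrow> x$k = 0"
  shows "x = (\<Sum>k\<in>K. x$k *\<^sub>R axis k 1)"
proof -
  have "(\<Sum>k\<in>K. x$k *\<^sub>R axis k 1) $ m = (\<Sum>k\<in>K. if m = k then x$k else 0)" for m
    by (simp only: sum_component vector_scaleR_component) (intro sum.cong refl, simp add: axis_def)
  then show ?thesis
    using assms by (simp add: vec_eq_iff sum.delta')
qed

lemma card_compl_singleton: "card (- {a :: 'a::finite}) = CARD('a) - 1"
  by (simp add: Compl_eq_Diff_UNIV card_Diff_subset)

lemma card_eq_CARD_minus_1E:
  fixes K :: "'a::finite set"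
  assumes "card K = CARD('a) - 1"
  obtains a where "K = - {a}"
proof -
  have "card (- K) = 1"
    using assms by (simp add: Compl_eq_Diff_UNIV card_Diff_subset)
  then obtain a where "- K = {a}"
    by (rule card_1_singletonE)
  then show ?thesis
    using that by (metis double_compl)
qed

lemma compl_singleton_nonempty:
  assumes "CARD('a::finite) \<ge> 2"
  shows "- {a :: 'a} \<noteq> {}"
  using card_compl_singleton[of a] assms by (intro notI) simp

section \<open>Roots, zero-sum subspaces and sign cones\<close>

definition rootA :: "'n::finite \<Rightarrow> 'n \<Rightarrow> real^'n" where
  "rootA i j = axis i 1 - axis j 1"

definition roots_between :: "'n::finite set \<Rightarrow> 'n set \<Rightarrow> (real^'n) set" where
  "roots_between I J = {rootA i j | i j. i \<in> I \<and> j \<in> J}"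

definition zero_sum_space :: "'n::finite set \<Rightarrow> (real^'n) set" where
  "zero_sum_space K = {x. (\<Sum>k\<in>UNIV. x$k) = 0 \<and> (\<forall>k. k \<notin> K \<longrightarrow> x$k = 0)}"

definition sign_cone :: "'n::finite set \<Rightarrow> 'n set \<Rightarrow> (real^'n) set" where
  "sign_cone I J = {x \<in> zero_sum_space (I \<union> J). (\<forall>i\<in>I. 0 \<le> x$i) \<and> (\<forall>j\<in>J. x$j \<le> 0)}"

lemma rootA_component: "rootA i j $ k = (if k = i then 1 else 0) - (if k = j then 1 else 0)"
  by (simp add: rootA_def axis_def)

lemma inner_rootA: "a \<bullet> rootA i j = a$i - a$j"
  by (simp add: rootA_def inner_diff_right inner_axis)

lemma subspace_zero_sum_space: "subspace (zero_sum_space K)"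
  unfolding subspace_def zero_sum_space_def
  by (simp add: sum.distrib sum_distrib_left[symmetric])

lemma rootA_in_zero_sum_space: "i \<in> K \<Longrightarrow> j \<in> K \<Longrightarrow> rootA i j \<in> zero_sum_space K"
  by (auto simp: zero_sum_space_def rootA_def sum_subtractf axis_def)

lemma sum_zero_sum_space:
  assumes "x \<in> zero_sum_space K"
  shows "(\<Sum>k\<in>K. x$k) = 0"
proof -
  have "(\<Sum>k\<in>K. x$k) = (\<Sum>k\<in>UNIV. x$k)"
    using assms by (intro sum.mono_neutral_left) (auto simp: zero_sum_space_def)
  then show ?thesis
    using assms by (simp add: zero_sum_space_def)
qed

lemma span_roots_between:
  assumes "I \<inter> J = {}" "I \<noteq> {}" "J \<noteq> {}"
  shows "span (roots_between I J) = zero_sum_space (I \<union> J)"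
proof
  show "span (roots_between I J) \<subseteq> zero_sum_space (I \<union> J)"
    by (rule span_minimal[OF _ subspace_zero_sum_space])
       (auto simp: roots_between_def intro!: rootA_in_zero_sum_space)
next
  obtain i0 j0 where ij0: "i0 \<in> I" "j0 \<in> J"
    using assms by blast
  have root_k_j0: "rootA k j0 \<in> span (roots_between I J)" if "k \<in> I \<union> J" for k
  proof (cases "k \<in> I")
    case True
    then show ?thesis
      using ij0 by (auto simp: roots_between_def intro!: span_base)
  next
    case False
    then have "rootA i0 j0 \<in> roots_between I J" "rootA i0 k \<in> roots_between I J"
      using that ij0 by (auto simp: roots_between_def)
    moreover have "rootA k j0 = rootA i0 j0 - rootA i0 k"
      by (simp add: rootA_def)
    ultimately show ?thesis
      by (metis span_base span_diff)
  qed
  show "zero_sum_space (I \<union> J) \<subseteq> span (roots_between I J)"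
  proof
    fix x assume x: "x \<in> zero_sum_space (I \<union> J)"
    then have "x = (\<Sum>k\<in>I \<union> J. x$k *\<^sub>R axis k 1)"
      by (intro vector_eq_sum_axis_on) (simp add: zero_sum_space_def)
    also have "\<dots> = (\<Sum>k\<in>I \<union> J. x$k *\<^sub>R axis k 1) - (\<Sum>k\<in>I \<union> J. x$k) *\<^sub>R axis j0 1"
      using sum_zero_sum_space[OF x] by simp
    also have "\<dots> = (\<Sum>k\<in>I \<union> J. x$k *\<^sub>R rootA k j0)"
      by (simp add: rootA_def scaleR_diff_right sum_subtractf scaleR_sum_left)
    finally have "x = (\<Sum>k\<in>I \<union> J. x$k *\<^sub>R rootA k j0)" .
    also have "\<dots> \<in> span (roots_between I J)"
      by (intro span_sum span_scale root_k_j0)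
    finally show "x \<in> span (roots_between I J)" .
  qed
qed

lemma dim_zero_sum_space:
  assumes "K \<noteq> {}"
  shows "int (dim (zero_sum_space K :: (real^'n::finite) set)) = int (card K) - 1"
proof -
  obtain k0 where k0: "k0 \<in> K"
    using assms by blast
  define W :: "(real^'n) set" where "W = {x. \<forall>k. k \<notin> K \<longrightarrow> x$k = 0}"
  define e :: "real^'n" where "e = axis k0 1"
  have e_notin: "e \<notin> zero_sum_space K"
    by (simp add: zero_sum_space_def e_def axis_def)
  have "span (insert e (zero_sum_space K)) = W"
  proof
    show "span (insert e (zero_sum_space K)) \<subseteq> W"
      using k0 by (intro span_minimal) (auto simp: W_def e_def axis_def zero_sum_space_def subspace_def)
  next
    show "W \<subseteq> span (insert e (zero_sum_space K))"
    proof
      fix x assume x: "x \<in> W"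
      define s where "s = (\<Sum>k\<in>UNIV. x$k)"
      have "(\<Sum>k\<in>UNIV. e$k) = 1"
        by (simp add: e_def axis_def)
      then have "(\<Sum>k\<in>UNIV. (x - s *\<^sub>R e)$k) = 0"
        by (simp add: s_def sum_subtractf sum_distrib_left[symmetric])
      moreover have "(x - s *\<^sub>R e)$k = 0" if "k \<notin> K" for k
        using x k0 that by (auto simp: W_def e_def axis_def)
      ultimately have "x - s *\<^sub>R e \<in> zero_sum_space K"
        by (simp add: zero_sum_space_def)
      then have "(x - s *\<^sub>R e) + s *\<^sub>R e \<in> span (insert e (zero_sum_space K))"
        by (intro span_add) (simp_all add: span_base span_scale)
      then show "x \<in> span (insert e (zero_sum_space K))"
        by simp
    qed
  qed
  moreover have "dim W = card K"
    unfolding W_def dim_vec_eq[symmetric] by (rule dim_substandard_cart)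
  ultimately have "dim (insert e (zero_sum_space K)) = card K"
    by (metis dim_span)
  then have "Suc (dim (zero_sum_space K)) = card K"
    using e_notin by (simp add: dim_insert span_eq_iff[THEN iffD2, OF subspace_zero_sum_space])
  then show ?thesis
    by simp
qed

lemma convex_sign_cone: "convex (sign_cone I J)"
  unfolding convex_def sign_cone_def zero_sum_space_def
  by (auto simp: sum.distrib sum_distrib_left[symmetric] intro!: add_nonpos_nonpos mult_nonneg_nonpos)

lemma scaleR_in_sign_cone: "x \<in> sign_cone I J \<Longrightarrow> 0 \<le> t \<Longrightarrow> t *\<^sub>R x \<in> sign_cone I J"
  unfolding sign_cone_def zero_sum_space_def
  by (auto simp: sum_distrib_left[symmetric] intro!: mult_nonneg_nonpos)

lemma roots_between_subset_sign_cone: "I \<inter> J = {} \<Longrightarrow> roots_between I J \<subseteq> sign_cone I J"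
  unfolding roots_between_def sign_cone_def
  by (auto intro!: rootA_in_zero_sum_space simp: rootA_component)

lemma sign_cone_Int_zero_sum_space:
  "sign_cone I J \<inter> zero_sum_space K = sign_cone (I \<inter> K) (J \<inter> K)"
  by (auto simp: sign_cone_def zero_sum_space_def)

lemma sign_cone_sum_neg_eq_sum_pos:
  assumes "I \<inter> J = {}" "x \<in> sign_cone I J"
  shows "(\<Sum>j\<in>J. - x$j) = (\<Sum>i\<in>I. x$i)"
  using assms sum_zero_sum_space[of x "I \<union> J"]
  by (simp add: sign_cone_def sum.union_disjoint sum_negf eq_neg_iff_add_eq_0 add.commute)

lemma sign_cone_eq_0_if_sum_pos_eq_0:
  assumes "I \<inter> J = {}" "x \<in> sign_cone I J" "(\<Sum>i\<in>I. x$i) = 0"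
  shows "x = 0"
proof -
  have "\<forall>i\<in>I. x$i = 0"
    using assms by (simp add: sign_cone_def sum_nonneg_eq_0_iff)
  moreover have "\<forall>j\<in>J. - x$j = 0"
    using assms sign_cone_sum_neg_eq_sum_pos[OF assms(1,2)]
    by (simp add: sign_cone_def sum_nonneg_eq_0_iff)
  ultimately show ?thesis
    using assms(2) by (auto simp: sign_cone_def zero_sum_space_def vec_eq_iff)
qed

lemma sign_cone_eq_singleton_0:
  assumes "I = {} \<or> J = {}"
  shows "sign_cone I J = {0}"
proof
  show "sign_cone I J \<subseteq> {0}"
  proof
    fix x assume x: "x \<in> sign_cone I J"
    have "(\<Sum>i\<in>I. x$i) = 0"
      using assms sign_cone_sum_neg_eq_sum_pos[OF _ x] by auto
    then show "x \<in> {0}"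
      using assms sign_cone_eq_0_if_sum_pos_eq_0[OF _ x] by auto
  qed
  show "{0} \<subseteq> sign_cone I J"
    by (simp add: sign_cone_def zero_sum_space_def)
qed

lemma normalized_sign_cone_in_convex_hull:
  assumes IJ: "I \<inter> J = {}" and x: "x \<in> sign_cone I J" and s: "(\<Sum>i\<in>I. x$i) = s" "s > 0"
  shows "(1 / s) *\<^sub>R x \<in> convex hull roots_between I J"
proof -
  have xI: "\<forall>i\<in>I. 0 \<le> x$i" and xJ: "\<forall>j\<in>J. x$j \<le> 0"
    and x0: "\<forall>k. k \<notin> I \<union> J \<longrightarrow> x$k = 0"
    using x by (auto simp: sign_cone_def zero_sum_space_def)
  have sJ: "(\<Sum>j\<in>J. - x$j) = s"
    using sign_cone_sum_neg_eq_sum_pos[OF IJ x] s by simp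
  define c where "c = (\<lambda>(i, j). x$i * - x$j / s\<^sup>2)"
  have "(\<Sum>p\<in>I \<times> J. c p) = (\<Sum>i\<in>I. \<Sum>j\<in>J. x$i * - x$j / s\<^sup>2)"
    by (simp add: c_def sum.cartesian_product)
  also have "\<dots> = (\<Sum>i\<in>I. x$i) * (\<Sum>j\<in>J. - x$j) / s\<^sup>2"
    by (simp only: sum_divide_distrib[symmetric] sum_product)
  finally have "(\<Sum>p\<in>I \<times> J. c p) = (\<Sum>i\<in>I. x$i) * (\<Sum>j\<in>J. - x$j) / s\<^sup>2" .
  then have c_sum: "(\<Sum>p\<in>I \<times> J. c p) = 1"
    using s sJ by (simp add: power2_eq_square)
  have c_nonneg: "0 \<le> c p" if "p \<in> I \<times> J" for p
    using that xI xJ by (auto simp: c_def intro!: divide_nonpos_nonneg mult_nonneg_nonpos)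
  have "(\<Sum>p\<in>I \<times> J. c p *\<^sub>R (case p of (i, j) \<Rightarrow> rootA i j))
      = (\<Sum>i\<in>I. \<Sum>j\<in>J. (x$i * - x$j / s\<^sup>2) *\<^sub>R (axis i 1 - axis j 1))"
    by (simp add: sum.cartesian_product) (intro sum.cong refl, auto simp: c_def rootA_def)
  also have "\<dots> = (1 / s\<^sup>2) *\<^sub>R (\<Sum>i\<in>I. \<Sum>j\<in>J. (x$i * - x$j) *\<^sub>R (axis i 1 - axis j 1))"
    by (simp add: scaleR_sum_right)
  also have "\<dots> = (1 / s\<^sup>2) *\<^sub>R ((\<Sum>j\<in>J. - x$j) *\<^sub>R (\<Sum>i\<in>I. x$i *\<^sub>R axis i 1)
                                  - (\<Sum>i\<in>I. x$i) *\<^sub>R (\<Sum>j\<in>J. (- x$j) *\<^sub>R axis j 1))"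
    by (subst sum_sum_scaleR_diff) simp
  also have "\<dots> = (1 / s) *\<^sub>R ((\<Sum>i\<in>I. x$i *\<^sub>R axis i 1) + (\<Sum>j\<in>J. x$j *\<^sub>R axis j 1))"
    using s sJ by (simp add: power2_eq_square sum_negf scaleR_diff_right scaleR_add_right)
  also have "\<dots> = (1 / s) *\<^sub>R x"
    using IJ by (simp add: sum.union_disjoint[symmetric] vector_eq_sum_axis_on[OF x0, symmetric])
  finally have "(1 / s) *\<^sub>R x = (\<Sum>p\<in>I \<times> J. c p *\<^sub>R (case p of (i, j) \<Rightarrow> rootA i j))"
    by simp
  also have "\<dots> \<in> convex hull roots_between I J"
    by (rule convex_sum[OF _ convex_convex_hull c_sum c_nonneg])
       (auto simp: roots_between_def intro!: hull_inc)
  finally show ?thesis .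
qed

lemma cone_over_convex_hull_roots_between:
  assumes IJ: "I \<inter> J = {}" and "I \<noteq> {}" "J \<noteq> {}"
  shows "cone_over (convex hull roots_between I J) = sign_cone I J"
proof
  have "convex hull roots_between I J \<subseteq> sign_cone I J"
    using roots_between_subset_sign_cone[OF IJ] convex_sign_cone by (rule hull_minimal)
  then show "cone_over (convex hull roots_between I J) \<subseteq> sign_cone I J"
    unfolding cone_over_def using scaleR_in_sign_cone by blast
next
  obtain i0 j0 where "i0 \<in> I" "j0 \<in> J"
    using assms by blast
  then have root0: "rootA i0 j0 \<in> convex hull roots_between I J"
    by (auto simp: roots_between_def intro!: hull_inc)
  show "sign_cone I J \<subseteq> cone_over (convex hull roots_between I J)"
  proof
    fix x assume x: "x \<in> sign_cone I J"
    define s where "s = (\<Sum>i\<in>I. x$i)"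
    have "s \<ge> 0"
      using x by (auto simp: s_def sign_cone_def intro!: sum_nonneg)
    then consider "s = 0" | "s > 0"
      by linarith
    then show "x \<in> cone_over (convex hull roots_between I J)"
    proof cases
      case 1
      then have "x = 0 *\<^sub>R rootA i0 j0"
        using sign_cone_eq_0_if_sum_pos_eq_0[OF IJ x] by (simp add: s_def)
      then show ?thesis
        using root0 unfolding cone_over_def by blast
    next
      case 2
      then have "x = s *\<^sub>R ((1 / s) *\<^sub>R x)"
        by simp
      then show ?thesis
        using 2 normalized_sign_cone_in_convex_hull[OF IJ x s_def[symmetric] 2]
        unfolding cone_over_def by fastforce
    qed
  qed
qed

lemma positive_coords_sign_cone:
  assumes "I \<inter> J = {}" "J \<noteq> {}"
  shows "{k. \<exists>x\<in>sign_cone I J. 0 < x$k} = I"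
proof (intro subset_antisym subsetI)
  fix k assume "k \<in> {k. \<exists>x\<in>sign_cone I J. 0 < x$k}"
  then obtain x where "x \<in> sign_cone I J" "0 < x$k"
    by blast
  then show "k \<in> I"
    by (auto simp: sign_cone_def zero_sum_space_def not_le[symmetric])
next
  fix k assume k: "k \<in> I"
  obtain j where j: "j \<in> J"
    using assms by blast
  then have "rootA k j \<in> sign_cone I J" "rootA k j $ k = 1"
    using roots_between_subset_sign_cone[OF assms(1)] k assms(1)
    by (auto simp: roots_between_def rootA_component)
  then show "k \<in> {k. \<exists>x\<in>sign_cone I J. 0 < x$k}"
    by force
qed

lemma negative_coords_sign_cone:
  assumes "I \<inter> J = {}" "I \<noteq> {}"
  shows "{k. \<exists>x\<in>sign_cone I J. x$k < 0} = J"
proof (intro subset_antisym subsetI)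
  fix k assume "k \<in> {k. \<exists>x\<in>sign_cone I J. x$k < 0}"
  then obtain x where "x \<in> sign_cone I J" "x$k < 0"
    by blast
  then show "k \<in> J"
    by (auto simp: sign_cone_def zero_sum_space_def not_le[symmetric])
next
  fix k assume k: "k \<in> J"
  obtain i where i: "i \<in> I"
    using assms by blast
  then have "rootA i k \<in> sign_cone I J" "rootA i k $ k = -1"
    using roots_between_subset_sign_cone[OF assms(1)] k assms(1)
    by (auto simp: roots_between_def rootA_component)
  then show "k \<in> {k. \<exists>x\<in>sign_cone I J. x$k < 0}"
    by force
qed

lemma aff_dim_convex_hull_roots_between:
  fixes I J :: "'n::finite set"
  assumes IJ: "I \<inter> J = {}" "I \<noteq> {}" "J \<noteq> {}"
  shows "aff_dim (convex hull roots_between I J) = int (card (I \<union> J)) - 2"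
proof -
  define a :: "real^'n" where "a = (\<chi> k. if k \<in> I then 1 else 0)"
  have "roots_between I J \<subseteq> {x. a \<bullet> x = 1}"
    using IJ(1) by (auto simp: roots_between_def inner_rootA a_def disjoint_iff)
  then have "affine hull roots_between I J \<subseteq> {x. a \<bullet> x = 1}"
    by (intro hull_minimal) (auto simp: affine_hyperplane)
  then have zero_notin: "0 \<notin> affine hull roots_between I J"
    by auto
  have "aff_dim (insert 0 (roots_between I J)) = aff_dim (affine hull (insert 0 (roots_between I J)))"
    by simp
  also have "\<dots> = aff_dim (zero_sum_space (I \<union> J))"
    using affine_hull_insert_span_gen[of 0 "roots_between I J"] span_roots_between[OF IJ] by simp
  also have "\<dots> = int (card (I \<union> J)) - 1"
    using dim_zero_sum_space[of "I \<union> J"] IJ by (simp add: aff_dim_subspace subspace_zero_sum_space)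
  finally show ?thesis
    using zero_notin by (simp add: aff_dim_convex_hull aff_dim_insert)
qed

lemma aff_dim_sign_cone:
  fixes I J :: "'n::finite set"
  assumes IJ: "I \<inter> J = {}" "I \<noteq> {}" "J \<noteq> {}"
  shows "aff_dim (sign_cone I J) = int (card (I \<union> J)) - 1"
proof -
  have "span (sign_cone I J) = zero_sum_space (I \<union> J)"
  proof
    show "span (sign_cone I J) \<subseteq> zero_sum_space (I \<union> J)"
      by (intro span_minimal subspace_zero_sum_space) (auto simp: sign_cone_def)
    show "zero_sum_space (I \<union> J) \<subseteq> span (sign_cone I J)"
      using span_roots_between[OF IJ] span_mono[OF roots_between_subset_sign_cone[OF IJ(1)]] by simp
  qed
  moreover have "affine hull (sign_cone I J) = span (sign_cone I J)"
    by (intro affine_hull_span_0 hull_inc) (simp add: sign_cone_def zero_sum_space_def)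
  ultimately have "aff_dim (sign_cone I J) = aff_dim (zero_sum_space (I \<union> J))"
    by (metis aff_dim_affine_hull)
  then show ?thesis
    using dim_zero_sum_space[of "I \<union> J"] IJ by (simp add: aff_dim_subspace subspace_zero_sum_space)
qed

section \<open>Faces of the root polytope\<close>

lemma rootsA_eq: "rootsA = {rootA i j | i j. i \<noteq> j}"
  by (simp add: rootsA_def rootA_def)

lemma finite_rootsA: "finite (rootsA :: (real^'n::finite) set)"
proof -
  have "(rootsA :: (real^'n) set) \<subseteq> (\<lambda>(i, j). rootA i j) ` UNIV"
    by (auto simp: rootsA_eq)
  then show ?thesis
    by (rule finite_subset) simp
qed

lemma rootA_in_polytopeA: "i \<noteq> j \<Longrightarrow> rootA i j \<in> polytopeA"
  by (auto simp: polytopeA_def rootsA_eq intro!: hull_inc)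

lemma rootsA_Int_hyperplane_max_min:
  fixes a :: "real^'n::finite"
  assumes "\<And>k. m \<le> a$k" "\<And>k. a$k \<le> M" "m < M"
  shows "rootsA \<inter> {x. a \<bullet> x = M - m} = roots_between {k. a$k = M} {k. a$k = m}"
proof -
  have extreme: "a$i - a$j = M - m \<longleftrightarrow> a$i = M \<and> a$j = m" for i j
    using assms(1)[of j] assms(2)[of i] by linarith
  have "a$i = M \<Longrightarrow> a$j = m \<Longrightarrow> i \<noteq> j" for i j
    using assms(3) by auto
  then show ?thesis
    unfolding rootsA_eq roots_between_def by (auto simp: inner_rootA extreme simp del: diff_eq_diff_eq) blast
qed

lemma polytopeA_Int_hyperplane_max_min:
  fixes a :: "real^'n::finite"
  assumes "\<And>k. m \<le> a$k" "\<And>k. a$k \<le> M" "m < M"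
  shows "polytopeA \<inter> {x. a \<bullet> x = M - m} face_of polytopeA"
    and "polytopeA \<inter> {x. a \<bullet> x = M - m} = convex hull roots_between {k. a$k = M} {k. a$k = m}"
proof -
  have "a \<bullet> r \<le> M - m" if "r \<in> rootsA" for r
    using that assms(1,2) by (force simp: rootsA_eq inner_rootA intro: diff_mono)
  then have "polytopeA \<subseteq> {x. a \<bullet> x \<le> M - m}"
    unfolding polytopeA_def by (intro hull_minimal) (auto simp: convex_halfspace_le)
  then show face: "polytopeA \<inter> {x. a \<bullet> x = M - m} face_of polytopeA"
    by (intro face_of_Int_supporting_hyperplane_le) (auto simp: polytopeA_def)
  have "rootsA \<inter> (polytopeA \<inter> {x. a \<bullet> x = M - m}) = rootsA \<inter> {x. a \<bullet> x = M - m}"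
    by (auto simp: polytopeA_def intro: hull_inc)
  then show "polytopeA \<inter> {x. a \<bullet> x = M - m} = convex hull roots_between {k. a$k = M} {k. a$k = m}"
    using face_of_convex_hull_eq_convex_hull_Int[OF finite_rootsA face[unfolded polytopeA_def]]
      rootsA_Int_hyperplane_max_min[OF assms]
    by (simp add: polytopeA_def)
qed

lemma convex_hull_roots_between_face_of_polytopeA:
  fixes I J :: "'n::finite set"
  assumes "I \<inter> J = {}"
  shows "convex hull roots_between I J face_of polytopeA"
proof -
  define a :: "real^'n" where "a = (\<chi> k. if k \<in> I then 1 else if k \<in> J then -1 else 0)"
  have "{k. a$k = 1} = I" "{k. a$k = -1} = J"
    using assms by (auto simp: a_def)
  moreover have "-1 \<le> a$k" "a$k \<le> 1" for k
    by (auto simp: a_def)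
  ultimately show ?thesis
    using polytopeA_Int_hyperplane_max_min[of "-1" a 1] by auto
qed

lemma convex_hull_roots_between_neq_polytopeA:
  assumes "I \<inter> J = {}" "I \<noteq> {}" "J \<noteq> {}"
  shows "convex hull roots_between I J \<noteq> polytopeA"
proof -
  obtain i j where ij: "i \<in> I" "j \<in> J"
    using assms by blast
  then have "rootA j i \<notin> sign_cone I J"
    using assms(1) by (auto simp: sign_cone_def rootA_component)
  moreover have "convex hull roots_between I J \<subseteq> sign_cone I J"
    using roots_between_subset_sign_cone[OF assms(1)] convex_sign_cone by (rule hull_minimal)
  moreover have "rootA j i \<in> polytopeA"
    using ij assms(1) by (auto intro: rootA_in_polytopeA)
  ultimately show ?thesis
    by blast
qed

lemma proper_face_of_polytopeA:
  fixes F :: "(real^'n::finite) set"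
  assumes F: "F face_of polytopeA" "F \<noteq> {}" "F \<noteq> polytopeA"
  obtains I J where "I \<inter> J = {}" "I \<noteq> {}" "J \<noteq> {}" "F = convex hull roots_between I J"
proof -
  have "polyhedron (polytopeA :: (real^'n) set)"
    unfolding polytopeA_def by (intro polytope_imp_polyhedron polytope_convex_hull finite_rootsA)
  then have "F exposed_face_of polytopeA"
    using F(1) exposed_face_of_polyhedron by blast
  then obtain a b where ab: "polytopeA \<subseteq> {x. a \<bullet> x \<le> b}" "F = polytopeA \<inter> {x. a \<bullet> x = b}"
    unfolding exposed_face_of_def by blast
  have root_le: "a$i - a$j \<le> b" if "i \<noteq> j" for i j
    using ab(1) rootA_in_polytopeA[OF that] by (auto simp: inner_rootA)
  have "F = convex hull (rootsA \<inter> F)"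
    using face_of_convex_hull_eq_convex_hull_Int[OF finite_rootsA] F(1) by (simp add: polytopeA_def)
  then have "rootsA \<inter> F \<noteq> {}"
    using F(2) by auto
  then obtain i0 j0 where ij0: "i0 \<noteq> j0" "a$i0 - a$j0 = b"
    using ab(2) by (force simp: rootsA_eq inner_rootA)
  define M where "M = Max (range (\<lambda>k. a$k))"
  define m where "m = Min (range (\<lambda>k. a$k))"
  have bounds: "m \<le> a$k" "a$k \<le> M" for k
    by (simp_all add: M_def m_def)
  have "M \<in> range (\<lambda>k. a$k)" "m \<in> range (\<lambda>k. a$k)"
    unfolding M_def m_def by simp_all
  then obtain iM jm where iM: "a$iM = M" and jm: "a$jm = m"
    by blast
  have "m < M"
  proof (rule ccontr)
    assume "\<not> m < M"
    then have const: "a$i = a$j" for i j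
      using bounds[of i] bounds[of j] by linarith
    then have "b = 0"
      using ij0(2) by (metis diff_self)
    then have "rootA i j \<in> F" if "i \<noteq> j" for i j
      using ab(2) rootA_in_polytopeA[OF that] const[of i j] by (simp add: inner_rootA)
    then have "rootsA \<subseteq> F"
      by (auto simp: rootsA_eq)
    then have "polytopeA \<subseteq> F"
      unfolding polytopeA_def using face_of_imp_convex[OF F(1)] by (rule hull_minimal)
    then show False
      using F(3) face_of_imp_subset[OF F(1)] by blast
  qed
  then have "b = M - m"
    using root_le[of iM jm] iM jm ij0 bounds[of i0] bounds[of j0] by force
  then have "F = convex hull roots_between {k. a$k = M} {k. a$k = m}"
    using ab(2) polytopeA_Int_hyperplane_max_min(2)[OF bounds \<open>m < M\<close>] by simp
  moreover have "{k. a$k = M} \<inter> {k. a$k = m} = {}" "{k. a$k = M} \<noteq> {}" "{k. a$k = m} \<noteq> {}"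
    using \<open>m < M\<close> iM jm by auto
  ultimately show ?thesis
    using that by blast
qed

lemma proper_faces_polytopeA:
  "{F. F face_of polytopeA \<and> F \<noteq> {} \<and> F \<noteq> polytopeA}
     = (\<lambda>(I, J). convex hull roots_between I J) ` {(I, J). I \<inter> J = {} \<and> I \<noteq> {} \<and> J \<noteq> {}}"
proof (intro subset_antisym subsetI)
  fix F assume "F \<in> {F. F face_of polytopeA \<and> F \<noteq> {} \<and> F \<noteq> polytopeA}"
  then obtain I J where "I \<inter> J = {}" "I \<noteq> {}" "J \<noteq> {}" "F = convex hull roots_between I J"
    using proper_face_of_polytopeA by blast
  then show "F \<in> (\<lambda>(I, J). convex hull roots_between I J) ` {(I, J). I \<inter> J = {} \<and> I \<noteq> {} \<and> J \<noteq> {}}"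
    by blast
next
  fix F assume "F \<in> (\<lambda>(I, J). convex hull roots_between I J) ` {(I, J). I \<inter> J = {} \<and> I \<noteq> {} \<and> J \<noteq> {}}"
  then obtain I J where IJ: "I \<inter> J = {}" "I \<noteq> {}" "J \<noteq> {}" "F = convex hull roots_between I J"
    by blast
  moreover obtain i j where "i \<in> I" "j \<in> J"
    using IJ by blast
  then have "rootA i j \<in> F"
    using IJ(4) by (auto simp: roots_between_def intro!: hull_inc)
  ultimately show "F \<in> {F. F face_of polytopeA \<and> F \<noteq> {} \<and> F \<noteq> polytopeA}"
    using convex_hull_roots_between_face_of_polytopeA[OF IJ(1)]
      convex_hull_roots_between_neq_polytopeA[OF IJ(1-3)] by auto
qed

section \<open>Faces of the arrangement\<close>

lemma zero_sum_space_singleton: "zero_sum_space {k} = {0}"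
proof
  show "zero_sum_space {k} \<subseteq> {0}"
  proof
    fix x assume x: "x \<in> zero_sum_space {k}"
    then have "x$k = 0"
      using sum_zero_sum_space[OF x] by simp
    then show "x \<in> {0}"
      using x by (auto simp: zero_sum_space_def vec_eq_iff)
  qed
qed (simp add: zero_sum_space_def)

lemma aff_dim_polytopeA_ge:
  assumes "CARD('n::finite) \<ge> 2"
  shows "int CARD('n) - 2 \<le> aff_dim (polytopeA :: (real^'n) set)"
proof -
  obtain k :: 'n where True
    by blast
  have "- {k} \<noteq> {}"
    using assms by (rule compl_singleton_nonempty)
  then have "aff_dim (convex hull roots_between {k} (- {k})) = int CARD('n) - 2"
    using aff_dim_convex_hull_roots_between[of "{k}" "- {k}"] by simp
  moreover have "convex hull roots_between {k} (- {k}) \<subseteq> polytopeA"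
    using convex_hull_roots_between_face_of_polytopeA[of "{k}" "- {k}"] face_of_imp_subset by auto
  ultimately show ?thesis
    by (metis aff_dim_subset)
qed

lemma arrA_eq:
  assumes N: "CARD('n::finite) \<ge> 2"
  shows "(arrA :: (real^'n) set set) = range (\<lambda>a. zero_sum_space (- {a}))"
proof (intro subset_antisym subsetI)
  fix X :: "(real^'n) set" assume "X \<in> arrA"
  then obtain F where F: "X = span F" "F face_of polytopeA" "aff_dim F = int CARD('n) - 3"
    unfolding arrA_def by blast
  show "X \<in> range (\<lambda>a. zero_sum_space (- {a}))"
  proof (cases "F = {}")
    case True
    obtain a :: 'n where True
      by blast
    have "card (- {a}) = 1"
      using F(3) True by (simp add: card_compl_singleton)
    then obtain b where "- {a} = {b}"
      by (rule card_1_singletonE)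
    then have "X = zero_sum_space (- {a})"
      using F(1) True by (simp add: zero_sum_space_singleton)
    then show ?thesis
      by simp
  next
    case False
    moreover have "F \<noteq> polytopeA"
      using F(3) aff_dim_polytopeA_ge[OF N] by auto
    ultimately obtain I J where IJ: "I \<inter> J = {}" "I \<noteq> {}" "J \<noteq> {}" "F = convex hull roots_between I J"
      using proper_face_of_polytopeA[OF F(2)] by blast
    then have "card (I \<union> J) = CARD('n) - 1"
      using F(3) aff_dim_convex_hull_roots_between[OF IJ(1-3)] N by simp
    then obtain a where "I \<union> J = - {a}"
      by (rule card_eq_CARD_minus_1E)
    moreover have "X = zero_sum_space (I \<union> J)"
      using F(1) IJ by (simp add: span_convex_hull span_roots_between)
    ultimately show ?thesis
      by simp
  qed
next
  fix X :: "(real^'n) set" assume "X \<in> range (\<lambda>a. zero_sum_space (- {a}))"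
  then obtain a where a: "X = zero_sum_space (- {a})"
    by blast
  show "X \<in> arrA"
  proof (cases "CARD('n) = 2")
    case True
    then have "card (- {a}) = 1"
      by (simp add: card_compl_singleton)
    then obtain b where "- {a} = {b}"
      by (rule card_1_singletonE)
    then have "X = span {}" "aff_dim ({} :: (real^'n) set) = int CARD('n) - 3"
      using a True by (simp_all add: zero_sum_space_singleton)
    then show ?thesis
      unfolding arrA_def using empty_face_of by blast
  next
    case False
    then have "card (- {a}) \<ge> 2"
      using N by (simp add: card_compl_singleton)
    then have "- {a} \<noteq> {}"
      by auto
    then obtain b where b: "b \<in> - {a}"
      by blast
    then have "card (- {a} - {b}) \<ge> 1"
      using \<open>card (- {a}) \<ge> 2\<close> by (simp add: card_Diff_singleton)
    then have "- {a} - {b} \<noteq> {}"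
      by (metis card.empty not_one_le_zero)
    define I where "I = {b}"
    define J where "J = - {a} - {b}"
    have IJ: "I \<inter> J = {}" "I \<noteq> {}" "J \<noteq> {}" and union: "I \<union> J = - {a}"
      using b \<open>- {a} - {b} \<noteq> {}\<close> by (auto simp: I_def J_def)
    have "aff_dim (convex hull roots_between I J) = int CARD('n) - 3"
      using aff_dim_convex_hull_roots_between[OF IJ] union card_compl_singleton[of a] N by simp
    moreover have "X = span (convex hull roots_between I J)"
      using a union IJ by (simp add: span_convex_hull span_roots_between)
    ultimately show ?thesis
      unfolding arrA_def using convex_hull_roots_between_face_of_polytopeA[OF IJ(1)] by blast
  qed
qed

lemma ambientA_eq:
  assumes "CARD('n::finite) \<ge> 2"
  shows "(ambientA :: (real^'n) set) = zero_sum_space UNIV"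
proof
  show "(ambientA :: (real^'n) set) \<subseteq> zero_sum_space UNIV"
    unfolding ambientA_def
    by (intro span_minimal subspace_zero_sum_space) (auto simp: rootsA_eq intro!: rootA_in_zero_sum_space)
next
  obtain k :: 'n where True
    by blast
  have "- {k} \<noteq> {}"
    using assms by (rule compl_singleton_nonempty)
  then have "span (roots_between {k} (- {k})) = zero_sum_space UNIV"
    using span_roots_between[of "{k}" "- {k}"] by simp
  moreover have "roots_between {k} (- {k}) \<subseteq> rootsA"
    by (auto simp: roots_between_def rootsA_eq)
  ultimately show "zero_sum_space UNIV \<subseteq> (ambientA :: (real^'n) set)"
    unfolding ambientA_def by (metis span_mono)
qed

lemma ambientA_minus_arrA:
  assumes "CARD('n::finite) \<ge> 2"
  shows "(ambientA :: (real^'n) set) - \<Union>arrA = {x \<in> zero_sum_space UNIV. \<forall>a. x$a \<noteq> 0}"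
  unfolding ambientA_eq[OF assms] arrA_eq[OF assms] by (auto simp: zero_sum_space_def)

definition chamber :: "'n::finite set \<Rightarrow> (real^'n) set" where
  "chamber I = {x \<in> zero_sum_space UNIV. (\<forall>i\<in>I. 0 < x$i) \<and> (\<forall>j\<in>- I. x$j < 0)}"

lemma convex_chamber: "convex (chamber I)"
proof -
  have "chamber I = zero_sum_space UNIV \<inter> (\<Inter>i\<in>I. {x. axis i 1 \<bullet> x > 0}) \<inter> (\<Inter>j\<in>- I. {x. axis j 1 \<bullet> x < 0})"
    by (auto simp: chamber_def inner_axis')
  then show ?thesis
    by (simp add: convex_Int convex_INT convex_halfspace_gt convex_halfspace_lt
        subspace_imp_convex subspace_zero_sum_space)
qed

lemma chamber_subset_nonzero_coords: "chamber I \<subseteq> {x \<in> zero_sum_space UNIV. \<forall>a. x$a \<noteq> 0}"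
proof (intro subsetI CollectI conjI allI)
  fix x a assume "x \<in> chamber I"
  then show "x \<in> zero_sum_space UNIV" "x$a \<noteq> 0"
    by (cases "a \<in> I"; force simp: chamber_def)+
qed

lemma connected_component_nonzero_coords:
  assumes x: "x \<in> {x \<in> zero_sum_space UNIV. \<forall>a. x$a \<noteq> 0}"
  shows "connected_component_set {x \<in> zero_sum_space UNIV. \<forall>a. x$a \<noteq> 0} x = chamber {a. 0 < x$a}"
    (is "connected_component_set ?U x = _")
proof
  show "connected_component_set ?U x \<subseteq> chamber {a. 0 < x$a}"
  proof
    fix y assume y: "y \<in> connected_component_set ?U x"
    have "0 < y$a \<longleftrightarrow> 0 < x$a" for a
    proof (rule ccontr)
      \<comment> \<open>Otherwise the a-th coordinate vanishes somewhere on the component, by the intermediate value theorem.\<close>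
      assume sign: "\<not> (0 < y$a \<longleftrightarrow> 0 < x$a)"
      have x_in: "x \<in> connected_component_set ?U x"
        using x by simp
      have "\<exists>z\<in>connected_component_set ?U x. z$a = 0"
      proof (cases "0 < x$a")
        case True
        then show ?thesis
          using sign connected_ivt_component_cart[OF connected_connected_component y x_in, of a 0] by simp
      next
        case False
        then show ?thesis
          using sign connected_ivt_component_cart[OF connected_connected_component x_in y, of a 0] by simp
      qed
      then obtain z where "z \<in> connected_component_set ?U x" "z$a = 0"
        by blast
      then show False
        using connected_component_subset by fastforce
    qed
    moreover have "y \<in> ?U"
      using y connected_component_subset by blast
    ultimately show "y \<in> chamber {a. 0 < x$a}"
      by (auto simp: chamber_def) (metis linorder_neqE_linordered_idom)
  qed
next
  have "x \<in> chamber {a. 0 < x$a}"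
    using x by (auto simp: chamber_def) (metis linorder_neqE_linordered_idom)
  moreover have "chamber {a. 0 < x$a} \<subseteq> ?U"
    by (rule chamber_subset_nonzero_coords)
  ultimately show "chamber {a. 0 < x$a} \<subseteq> connected_component_set ?U x"
    by (intro connected_component_maximal convex_connected convex_chamber)
qed

lemma chamber_eq_positive_coords: "x \<in> chamber I \<Longrightarrow> I = {a. 0 < x$a}"
  by (auto simp: chamber_def) (meson ComplI less_asym)

lemma arr_regions_eq:
  assumes "CARD('n::finite) \<ge> 2"
  shows "arr_regions (ambientA :: (real^'n) set) arrA = {chamber I | I. chamber I \<noteq> {}}"
proof (intro subset_antisym subsetI)
  fix R assume "R \<in> arr_regions (ambientA :: (real^'n) set) arrA"
  then obtain x where x: "x \<in> {x \<in> zero_sum_space UNIV. \<forall>a. x$a \<noteq> 0}"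
      and R: "R = connected_component_set {x \<in> zero_sum_space UNIV. \<forall>a. x$a \<noteq> 0} x"
    unfolding arr_regions_def ambientA_minus_arrA[OF assms] components_iff by blast
  then have "R = chamber {a. 0 < x$a}"
    by (simp add: connected_component_nonzero_coords)
  moreover have "x \<in> R"
    using x R by simp
  ultimately show "R \<in> {chamber I | I. chamber I \<noteq> {}}"
    by blast
next
  fix R assume "R \<in> {chamber I | I :: 'n set. chamber I \<noteq> {}}"
  then obtain I x where R: "R = chamber I" and x: "x \<in> chamber I"
    by blast
  then have x_in: "x \<in> {x \<in> zero_sum_space UNIV. \<forall>a. x$a \<noteq> 0}"
    using chamber_subset_nonzero_coords by blast
  then have "R = connected_component_set {x \<in> zero_sum_space UNIV. \<forall>a. x$a \<noteq> 0} x"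
    using R chamber_eq_positive_coords[OF x] by (simp add: connected_component_nonzero_coords)
  then show "R \<in> arr_regions ambientA arrA"
    unfolding arr_regions_def ambientA_minus_arrA[OF assms] components_iff
    using x_in by (intro exI[of _ x]) simp
qed

lemma closed_sign_cone: "closed (sign_cone I J)"
proof -
  have "sign_cone I J = zero_sum_space (I \<union> J) \<inter> (\<Inter>i\<in>I. {x. x$i \<ge> 0}) \<inter> (\<Inter>j\<in>J. {x. x$j \<le> 0})"
    by (auto simp: sign_cone_def)
  then show ?thesis
    by (simp add: closed_Int closed_INT closed_subspace subspace_zero_sum_space
        closed_halfspace_component_ge_cart closed_halfspace_component_le_cart)
qed

lemma closure_chamber:
  assumes "x \<in> chamber I"
  shows "closure (chamber I) = sign_cone I (- I)"
proof
  have "chamber I \<subseteq> sign_cone I (- I)"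
    by (auto simp: chamber_def sign_cone_def less_imp_le)
  then show "closure (chamber I) \<subseteq> sign_cone I (- I)"
    using closed_sign_cone by (rule closure_minimal)
next
  show "sign_cone I (- I) \<subseteq> closure (chamber I)"
  proof
    fix y assume y: "y \<in> sign_cone I (- I)"
    have "open_segment y x \<subseteq> chamber I"
    proof
      fix z assume "z \<in> open_segment y x"
      then obtain u where u: "0 < u" "u < 1" and z: "z = (1 - u) *\<^sub>R y + u *\<^sub>R x"
        by (auto simp: in_segment)
      have "z$i > 0" if "i \<in> I" for i
        using that u y assms by (auto simp: z sign_cone_def chamber_def intro!: add_nonneg_pos)
      moreover have "z$j < 0" if "j \<in> - I" for j
        using that u y assms
        by (auto simp: z sign_cone_def chamber_def intro!: add_nonpos_neg mult_nonneg_nonpos mult_pos_neg)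
      moreover have "z \<in> zero_sum_space UNIV"
        using y assms subspace_zero_sum_space[of UNIV]
        by (auto simp: z sign_cone_def chamber_def zero_sum_space_def sum.distrib sum_distrib_left[symmetric])
      ultimately show "z \<in> chamber I"
        by (simp add: chamber_def)
    qed
    then have "closure (open_segment y x) \<subseteq> closure (chamber I)"
      by (rule closure_mono)
    then show "y \<in> closure (chamber I)"
      using assms closure_subset by (cases "y = x") auto
  qed
qed

lemma zero_sum_space_Int_hyperplanes:
  "zero_sum_space UNIV \<inter> \<Inter>((\<lambda>a. zero_sum_space (- {a})) ` A) = zero_sum_space (- A)"
  by (auto simp: zero_sum_space_def)

lemma arr_intersections_eq:
  assumes "CARD('n::finite) \<ge> 2"
  shows "arr_intersections (ambientA :: (real^'n) set) arrA = range zero_sum_space"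
proof (intro subset_antisym subsetI)
  fix X assume "X \<in> arr_intersections (ambientA :: (real^'n) set) arrA"
  then obtain S where S: "S \<subseteq> range (\<lambda>a. zero_sum_space (- {a}))" "X = zero_sum_space UNIV \<inter> \<Inter>S"
    unfolding arr_intersections_def arrA_eq[OF assms] ambientA_eq[OF assms] by blast
  then have "S = (\<lambda>a. zero_sum_space (- {a})) ` {a. zero_sum_space (- {a}) \<in> S}"
    by blast
  then have "X = zero_sum_space (- {a. zero_sum_space (- {a}) \<in> S})"
    using S(2) zero_sum_space_Int_hyperplanes by metis
  then show "X \<in> range zero_sum_space"
    by blast
next
  fix X assume "X \<in> range (zero_sum_space :: 'n set \<Rightarrow> _)"
  then obtain K where K: "X = zero_sum_space K"
    by blast
  have "(\<lambda>a. zero_sum_space (- {a})) ` (- K) \<subseteq> arrA"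
    using arrA_eq[OF assms] by auto
  moreover have "X = ambientA \<inter> \<Inter>((\<lambda>a. zero_sum_space (- {a})) ` (- K))"
    using K zero_sum_space_Int_hyperplanes[of "- K"] ambientA_eq[OF assms] by simp
  moreover have "0 \<in> X"
    using K by (simp add: zero_sum_space_def)
  ultimately show "X \<in> arr_intersections ambientA arrA"
    unfolding arr_intersections_def by blast
qed

lemma arr_faces_eq:
  assumes "CARD('n::finite) \<ge> 2"
  shows "arr_faces (ambientA :: (real^'n) set) arrA
           = {sign_cone (I \<inter> K) (- I \<inter> K) | I K. chamber I \<noteq> {}}"
proof -
  have "closure R \<inter> X = sign_cone (I \<inter> K) (- I \<inter> K)"
    if "R = chamber I" "chamber I \<noteq> {}" "X = zero_sum_space K" for R X I K
    using that closure_chamber sign_cone_Int_zero_sum_space by blast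
  moreover have "0 \<in> sign_cone I J" for I J :: "'n set"
    by (simp add: sign_cone_def zero_sum_space_def)
  ultimately show ?thesis
    unfolding arr_faces_def arr_regions_eq[OF assms] arr_intersections_eq[OF assms]
    by fastforce
qed

lemma chamber_nonempty:
  fixes I :: "'n::finite set"
  assumes "I \<noteq> {}" "- I \<noteq> {}"
  shows "chamber I \<noteq> {}"
proof -
  define p where "p = real (card I)"
  define q where "q = real (card (- I))"
  have "p > 0" "q > 0"
    using assms by (simp_all add: p_def q_def card_gt_0_iff)
  define x :: "real^'n" where "x = (\<chi> k. if k \<in> I then 1 / p else - 1 / q)"
  have "(\<Sum>k\<in>UNIV. x$k) = (\<Sum>k\<in>I. 1 / p) + (\<Sum>k\<in>- I. - 1 / q)"
    by (simp add: x_def sum.If_cases Int_def Collect_neg_eq[symmetric] Compl_eq)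
  also have "\<dots> = 0"
    using assms by (simp add: p_def q_def)
  finally have "x \<in> chamber I"
    using \<open>p > 0\<close> \<open>q > 0\<close> by (simp add: chamber_def zero_sum_space_def x_def)
  then show ?thesis
    by blast
qed

lemma arr_faces_minus_zero_eq:
  assumes "CARD('n::finite) \<ge> 2"
  shows "arr_faces (ambientA :: (real^'n) set) arrA - {{0}}
           = (\<lambda>(I, J). sign_cone I J) ` {(I, J). I \<inter> J = {} \<and> I \<noteq> {} \<and> J \<noteq> {}}"
proof (intro subset_antisym subsetI)
  fix G assume "G \<in> arr_faces (ambientA :: (real^'n) set) arrA - {{0}}"
  then obtain I K where "G = sign_cone (I \<inter> K) (- I \<inter> K)" "G \<noteq> {0}"
    unfolding arr_faces_eq[OF assms] by blast
  moreover have "I \<inter> K \<noteq> {}" "- I \<inter> K \<noteq> {}"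
    using calculation sign_cone_eq_singleton_0 by blast+
  ultimately show "G \<in> (\<lambda>(I, J). sign_cone I J) ` {(I, J). I \<inter> J = {} \<and> I \<noteq> {} \<and> J \<noteq> {}}"
    by blast
next
  fix G assume "G \<in> (\<lambda>(I, J). sign_cone I J) ` {(I, J). I \<inter> J = {} \<and> I \<noteq> {} \<and> (J :: 'n set) \<noteq> {}}"
  then obtain I J where IJ: "I \<inter> J = {}" "I \<noteq> {}" "J \<noteq> {}" and G: "G = sign_cone I J"
    by blast
  then have "chamber I \<noteq> {}"
    using chamber_nonempty by blast
  moreover have "I \<inter> (I \<union> J) = I" "- I \<inter> (I \<union> J) = J"
    using IJ(1) by auto
  then have "G = sign_cone (I \<inter> (I \<union> J)) (- I \<inter> (I \<union> J))"
    using G by simp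
  ultimately have "G \<in> arr_faces ambientA arrA"
    unfolding arr_faces_eq[OF assms] by blast
  moreover have "G \<noteq> {0}"
    using negative_coords_sign_cone[OF IJ(1,2)] IJ(3) G by auto
  ultimately show "G \<in> arr_faces ambientA arrA - {{0}}"
    by blast
qed

lemma inj_on_sign_cone:
  "inj_on (\<lambda>(I, J). sign_cone I J) {(I, J). I \<inter> J = {} \<and> I \<noteq> {} \<and> (J :: 'n::finite set) \<noteq> {}}"
proof (rule inj_onI, clarify)
  fix I J I' J' :: "'n set"
  assume "I \<inter> J = {}" "I \<noteq> {}" "J \<noteq> {}" "I' \<inter> J' = {}" "I' \<noteq> {}" "J' \<noteq> {}"
    and eq: "sign_cone I J = sign_cone I' J'"
  then show "I = I' \<and> J = J'"
    using positive_coords_sign_cone[of I J] positive_coords_sign_cone[of I' J']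
      negative_coords_sign_cone[of I J] negative_coords_sign_cone[of I' J'] by simp
qed

theorem corollary4p2:
  assumes "CARD('n::finite) \<ge> 2"
  shows "bij_betw cone_over
           {F. F face_of (polytopeA :: (real^'n) set) \<and> F \<noteq> {} \<and> F \<noteq> polytopeA}
           (arr_faces (ambientA :: (real^'n) set) arrA - {{0}})
       \<and> (\<forall>F. F face_of (polytopeA :: (real^'n) set) \<and> F \<noteq> {} \<and> F \<noteq> polytopeA
              \<longrightarrow> aff_dim (cone_over F) = aff_dim F + 1)"
proof -
  let ?P = "{(I, J). I \<inter> J = {} \<and> I \<noteq> {} \<and> (J :: 'n set) \<noteq> {}}"
  let ?hull = "\<lambda>(I, J). convex hull roots_between I J :: (real^'n) set"
  have cone: "cone_over (?hull p) = (\<lambda>(I, J). sign_cone I J) p" if "p \<in> ?P" for p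
    using that cone_over_convex_hull_roots_between by auto
  have bij: "bij_betw cone_over (?hull ` ?P) ((\<lambda>(I, J). sign_cone I J) ` ?P)"
  proof (rule bij_betw_imageI)
    have "inj_on (cone_over \<circ> ?hull) ?P"
      using inj_on_cong[of ?P "cone_over \<circ> ?hull" "\<lambda>(I, J). sign_cone I J"] cone inj_on_sign_cone
      by simp
    then show "inj_on cone_over (?hull ` ?P)"
      by (rule inj_on_imageI)
    show "cone_over ` ?hull ` ?P = (\<lambda>(I, J). sign_cone I J) ` ?P"
      unfolding image_image by (rule image_cong[OF refl cone])
  qed
  have aff_dim: "aff_dim (cone_over (?hull p)) = aff_dim (?hull p) + 1" if p: "p \<in> ?P" for p
  proof -
    obtain I J where "p = (I, J)" and IJ: "I \<inter> J = {}" "I \<noteq> {}" "J \<noteq> {}"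
      using p by blast
    then show ?thesis
      using cone_over_convex_hull_roots_between[OF IJ] aff_dim_sign_cone[OF IJ]
        aff_dim_convex_hull_roots_between[OF IJ] by simp
  qed
  show ?thesis
  proof (intro conjI allI impI)
    show "bij_betw cone_over {F. F face_of polytopeA \<and> F \<noteq> {} \<and> F \<noteq> polytopeA}
        (arr_faces (ambientA :: (real^'n) set) arrA - {{0}})"
      unfolding proper_faces_polytopeA arr_faces_minus_zero_eq[OF assms] by (rule bij)
  next
    fix F :: "(real^'n) set"
    assume "F face_of polytopeA \<and> F \<noteq> {} \<and> F \<noteq> polytopeA"
    then have "F \<in> ?hull ` ?P"
      using proper_faces_polytopeA by blast
    then show "aff_dim (cone_over F) = aff_dim F + 1"
      using aff_dim by blast
  qed
qed

end
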